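(* Let $\Gamma=([n],E)$ be a connected simple graph and $m$ a positive integer. Then the polytopes $$Q_{\Gamma,m}=\sum_{\substack{S\subseteq[n],\,|S|\le m+1\\ \Gamma|_S\text{ connected}}}\Delta_S\qquad\text{and}\qquad Q^L_{\Gamma,m}=\sum_{\substack{S\subseteq[n],\,|S|\le m+1\\ \Gamma|_S\cong L_{|S|}}}\Delta_S$$ are normally equivalent, i.e. their normal fans coincide.
   Context: $L_r$ is the path graph on $r$ vertices and $\Gamma|_S$ is the induced subgraph on $S$; the sums are Minkowski sums over nonempty subsets $S$. For nonempty $S\subseteq[n]$, $\Delta_S=\mathrm{conv}\{e_s:s\in S\}\subset\mathbb{R}^n$, where $e_s$ are the standard basis vectors. *)

theory Defs
  imports "HOL-Analysis.Analysis"
begin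

definition simple_graph :: "('n \<Rightarrow> 'n \<Rightarrow> bool) \<Rightarrow> bool" where
  "simple_graph E \<longleftrightarrow> (\<forall>x y. E x y \<longrightarrow> E y x) \<and> (\<forall>x. \<not> E x x)"

definition induced_connected :: "('n \<Rightarrow> 'n \<Rightarrow> bool) \<Rightarrow> 'n set \<Rightarrow> bool" where
  "induced_connected E S \<longleftrightarrow> S \<noteq> {} \<and>
     (\<forall>x\<in>S. \<forall>y\<in>S. (x, y) \<in> {(u, v). u \<in> S \<and> v \<in> S \<and> E u v}\<^sup>*)"

definition graph_connected :: "('n \<Rightarrow> 'n \<Rightarrow> bool) \<Rightarrow> bool" where
  "graph_connected E \<longleftrightarrow> induced_connected E UNIV"

definition path_edge :: "nat \<Rightarrow> nat \<Rightarrow> bool" where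
  "path_edge i j \<longleftrightarrow> i + 1 = j \<or> j + 1 = i"

definition induced_iso_path :: "('n \<Rightarrow> 'n \<Rightarrow> bool) \<Rightarrow> 'n set \<Rightarrow> bool" where
  "induced_iso_path E S \<longleftrightarrow> (\<exists>f. bij_betw f {0..<card S} S \<and>
     (\<forall>i<card S. \<forall>j<card S. E (f i) (f j) \<longleftrightarrow> path_edge i j))"

definition simplex_of :: "'n::finite set \<Rightarrow> (real ^ 'n) set" where
  "simplex_of S = convex hull ((\<lambda>s. axis s 1) ` S)"

definition minkowski_sum :: "'i set \<Rightarrow> ('i \<Rightarrow> 'a::comm_monoid_add set) \<Rightarrow> 'a set" where
  "minkowski_sum I P = {(\<Sum>i\<in>I. x i) | x. \<forall>i\<in>I. x i \<in> P i}"

definition normal_cone :: "'a::euclidean_space set \<Rightarrow> 'a set \<Rightarrow> 'a set" where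
  "normal_cone P F = {w. \<forall>x\<in>F. \<forall>y\<in>P. inner w y \<le> inner w x}"

definition normal_fan :: "'a::euclidean_space set \<Rightarrow> 'a set set" where
  "normal_fan P = {normal_cone P F | F. F face_of P \<and> F \<noteq> {}}"

definition Q_conn :: "('n::finite \<Rightarrow> 'n \<Rightarrow> bool) \<Rightarrow> nat \<Rightarrow> (real ^ 'n) set" where
  "Q_conn E m = minkowski_sum {S. S \<noteq> {} \<and> card S \<le> m + 1 \<and> induced_connected E S} simplex_of"

definition Q_path :: "('n::finite \<Rightarrow> 'n \<Rightarrow> bool) \<Rightarrow> nat \<Rightarrow> (real ^ 'n) set" where
  "Q_path E m = minkowski_sum {S. S \<noteq> {} \<and> card S \<le> m + 1 \<and> induced_iso_path E S} simplex_of"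

end

theory Submission
  imports Defs
begin

(* The normal fan of a polytope Q is determined by the relation "the face of Q maximizing w
   lies in the face of Q maximizing w'" between directions w, w'.  For a Minkowski sum this
   relation holds iff it holds for every summand, and the face of Delta_S maximizing w is
   Delta_A, where A is the set of maximizers of w on S.  So the two fans agree once we know:
   if on every induced path P the maximizers of w are maximizers of w', then the same holds
   on every connected S.  Given a maximizer s of w on S and any t in S, a shortest walk from
   s to t inside S spans an induced path P with s, t in P and |P| <= |S|; s maximizes w on P,
   hence w' on P, so w' t <= w' s. *)

definition support_face :: "'a::real_inner set \<Rightarrow> 'a \<Rightarrow> 'a set" where
  "support_face P w = {x \<in> P. \<forall>y\<in>P. w \<bullet> y \<le> w \<bullet> x}"

lemma support_face_subset: "support_face P w \<subseteq> P"
  by (auto simp: support_face_def)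

lemma support_face_nonempty:
  fixes P :: "'a::real_inner set"
  assumes "compact P" and "P \<noteq> {}"
  shows "support_face P w \<noteq> {}"
  using continuous_attains_sup[OF assms, of "inner w"]
  by (auto simp: support_face_def continuous_on_inner continuous_on_id)

lemma normal_cone_support_face:
  "normal_cone P (support_face P w) = {w'. support_face P w \<subseteq> support_face P w'}"
  by (auto simp: normal_cone_def support_face_def)

lemma polytope_nonempty_faces_eq_support_faces:
  fixes P :: "'a::euclidean_space set"
  assumes P: "polytope P" "P \<noteq> {}"
  shows "{F. F face_of P \<and> F \<noteq> {}} = range (support_face P)"
proof (intro set_eqI iffI)
  fix F assume "F \<in> {F. F face_of P \<and> F \<noteq> {}}"
  then have F: "F exposed_face_of P" "F \<noteq> {}"
    using exposed_face_of_polyhedron[OF polytope_imp_polyhedron[OF P(1)]] by auto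
  then obtain a b where ab: "P \<subseteq> {x. a \<bullet> x \<le> b}" "F = P \<inter> {x. a \<bullet> x = b}"
    unfolding exposed_face_of_def by blast
  with F(2) have "F = support_face P a"
    by (force simp: support_face_def)
  then show "F \<in> range (support_face P)" by blast
next
  fix F assume "F \<in> range (support_face P)"
  then obtain w where F: "F = support_face P w" by blast
  obtain c where c: "c \<in> F"
    using support_face_nonempty[OF polytope_imp_compact[OF P(1)] P(2)] F by blast
  then have "F = P \<inter> {x. w \<bullet> x = w \<bullet> c}"
    unfolding F support_face_def by (auto intro: order.antisym)
  moreover have "P \<inter> {x. w \<bullet> x = w \<bullet> c} face_of P"
    using c F by (intro face_of_Int_supporting_hyperplane_le polytope_imp_convex P)
      (auto simp: support_face_def)
  ultimately show "F \<in> {F. F face_of P \<and> F \<noteq> {}}" using c by blast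
qed

lemma normal_fan_polytope:
  fixes P :: "'a::euclidean_space set"
  assumes "polytope P" and "P \<noteq> {}"
  shows "normal_fan P = range (\<lambda>w. {w'. support_face P w \<subseteq> support_face P w'})"
proof -
  have "normal_fan P = normal_cone P ` {F. F face_of P \<and> F \<noteq> {}}"
    unfolding normal_fan_def by blast
  then show ?thesis
    unfolding polytope_nonempty_faces_eq_support_faces[OF assms]
    by (simp add: image_image normal_cone_support_face)
qed

lemma normal_fan_eqI:
  fixes P Q :: "'a::euclidean_space set"
  assumes "polytope P" "P \<noteq> {}" "polytope Q" "Q \<noteq> {}"
    and "\<And>w w'. support_face P w \<subseteq> support_face P w' \<longleftrightarrow> support_face Q w \<subseteq> support_face Q w'"
  shows "normal_fan P = normal_fan Q"
  using assms by (simp add: normal_fan_polytope)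

lemma minkowski_sum_eq_set_sum:
  "finite I \<Longrightarrow> minkowski_sum I P = sum P I"
  by (simp add: minkowski_sum_def set_sum_alt)

lemma minkowski_sum_nonempty:
  "\<forall>i\<in>I. P i \<noteq> {} \<Longrightarrow> minkowski_sum I P \<noteq> {}"
  unfolding minkowski_sum_def by (auto intro!: bchoice simp: ex_in_conv[symmetric])

lemma polytope_minkowski_sum:
  fixes P :: "'i \<Rightarrow> 'a::euclidean_space set"
  assumes "finite I" and "\<forall>i\<in>I. polytope (P i)"
  shows "polytope (minkowski_sum I P)"
proof -
  obtain V where V: "\<forall>i\<in>I. finite (V i) \<and> P i = convex hull V i"
    using assms(2) unfolding polytope_def by metis
  then have "minkowski_sum I P = convex hull (\<Sum>i\<in>I. V i)"
    by (simp add: minkowski_sum_eq_set_sum[OF assms(1)] convex_hull_set_sum)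
  then show ?thesis
    using V by (simp add: polytope_convex_hull finite_set_sum)
qed

lemma sum_mem_support_face_minkowski_sum_iff:
  fixes P :: "'i \<Rightarrow> 'a::real_inner set"
  assumes fin: "finite I" and x: "\<forall>i\<in>I. x i \<in> P i"
  shows "(\<Sum>i\<in>I. x i) \<in> support_face (minkowski_sum I P) w \<longleftrightarrow>
    (\<forall>i\<in>I. x i \<in> support_face (P i) w)"
proof
  assume max: "\<forall>i\<in>I. x i \<in> support_face (P i) w"
  have "w \<bullet> (\<Sum>i\<in>I. y i) \<le> w \<bullet> (\<Sum>i\<in>I. x i)" if "\<forall>i\<in>I. y i \<in> P i" for y
    using max that by (auto simp: inner_sum_right support_face_def intro: sum_mono)
  then show "(\<Sum>i\<in>I. x i) \<in> support_face (minkowski_sum I P) w"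
    using x by (auto simp: support_face_def minkowski_sum_def)
next
  assume max: "(\<Sum>i\<in>I. x i) \<in> support_face (minkowski_sum I P) w"
  show "\<forall>i\<in>I. x i \<in> support_face (P i) w"
  proof (rule ballI, rule ccontr)
    fix j assume j: "j \<in> I" and "x j \<notin> support_face (P j) w"
    then obtain y where y: "y \<in> P j" "w \<bullet> x j < w \<bullet> y"
      using x by (force simp: support_face_def)
    have "(\<Sum>i\<in>I. (x(j := y)) i) \<in> minkowski_sum I P"
      using x y unfolding minkowski_sum_def by auto
    then have "w \<bullet> (\<Sum>i\<in>I. (x(j := y)) i) \<le> w \<bullet> (\<Sum>i\<in>I. x i)"
      using max by (auto simp: support_face_def)
    moreover have "w \<bullet> (\<Sum>i\<in>I. (x(j := y)) i) = w \<bullet> (\<Sum>i\<in>I. x i) + (w \<bullet> y - w \<bullet> x j)"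
      using fin j by (simp add: sum.remove inner_add_right algebra_simps)
    ultimately show False using y(2) by linarith
  qed
qed

lemma support_face_minkowski_sum_subset_iff:
  fixes P :: "'i \<Rightarrow> 'a::real_inner set"
  assumes fin: "finite I" and nonempty: "\<forall>i\<in>I. support_face (P i) w \<noteq> {}"
  shows "support_face (minkowski_sum I P) w \<subseteq> support_face (minkowski_sum I P) w' \<longleftrightarrow>
    (\<forall>i\<in>I. support_face (P i) w \<subseteq> support_face (P i) w')"
proof
  assume sub: "\<forall>i\<in>I. support_face (P i) w \<subseteq> support_face (P i) w'"
  show "support_face (minkowski_sum I P) w \<subseteq> support_face (minkowski_sum I P) w'"
  proof
    fix z assume z: "z \<in> support_face (minkowski_sum I P) w"
    then obtain x where x: "z = (\<Sum>i\<in>I. x i)" "\<forall>i\<in>I. x i \<in> P i"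
      by (auto simp: support_face_def minkowski_sum_def)
    show "z \<in> support_face (minkowski_sum I P) w'"
      using z sub unfolding x sum_mem_support_face_minkowski_sum_iff[OF fin x(2)] by blast
  qed
next
  assume sub: "support_face (minkowski_sum I P) w \<subseteq> support_face (minkowski_sum I P) w'"
  show "\<forall>i\<in>I. support_face (P i) w \<subseteq> support_face (P i) w'"
  proof (intro ballI subsetI)
    fix j z assume j: "j \<in> I" and z: "z \<in> support_face (P j) w"
    have "\<forall>i\<in>I. \<exists>c. c \<in> support_face (P i) w"
      using nonempty by blast
    then obtain c where c: "\<forall>i\<in>I. c i \<in> support_face (P i) w"
      by metis
    define x where "x = c(j := z)"
    have x_max: "\<forall>i\<in>I. x i \<in> support_face (P i) w"
      using c z by (simp add: x_def)
    then have x_mem: "\<forall>i\<in>I. x i \<in> P i"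
      using support_face_subset by blast
    have "(\<Sum>i\<in>I. x i) \<in> support_face (minkowski_sum I P) w'"
      using sub x_max sum_mem_support_face_minkowski_sum_iff[OF fin x_mem] by blast
    then show "z \<in> support_face (P j) w'"
      using j sum_mem_support_face_minkowski_sum_iff[OF fin x_mem] by (auto simp: x_def)
  qed
qed

lemma axis_mem_simplex_of: "s \<in> S \<Longrightarrow> axis s 1 \<in> simplex_of S"
  unfolding simplex_of_def by (rule hull_inc) blast

lemma mem_simplex_of_iff:
  fixes x :: "real ^ 'n::finite"
  shows "x \<in> simplex_of S \<longleftrightarrow>
    (\<forall>i. 0 \<le> x $ i) \<and> (\<forall>i. i \<notin> S \<longrightarrow> x $ i = 0) \<and> (\<Sum>i\<in>UNIV. x $ i) = 1"
proof
  let ?C = "{x :: real ^ 'n. (\<forall>i. 0 \<le> x $ i) \<and> (\<forall>i. i \<notin> S \<longrightarrow> x $ i = 0) \<and>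
    (\<Sum>i\<in>UNIV. x $ i) = 1}"
  have "convex ?C"
    by (rule convexI) (auto simp: sum.distrib sum_distrib_left[symmetric])
  moreover have "(\<lambda>s. axis s 1) ` S \<subseteq> ?C"
    by (auto simp: axis_def)
  ultimately have "simplex_of S \<subseteq> ?C"
    unfolding simplex_of_def by (rule hull_minimal[rotated])
  then show "x \<in> simplex_of S \<Longrightarrow> (\<forall>i. 0 \<le> x $ i) \<and> (\<forall>i. i \<notin> S \<longrightarrow> x $ i = 0) \<and>
    (\<Sum>i\<in>UNIV. x $ i) = 1" by blast
next
  assume x: "(\<forall>i. 0 \<le> x $ i) \<and> (\<forall>i. i \<notin> S \<longrightarrow> x $ i = 0) \<and> (\<Sum>i\<in>UNIV. x $ i) = 1"
  then have "(\<Sum>i\<in>S. x $ i) = 1"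
    using sum.mono_neutral_right[of UNIV S "($) x"] by auto
  then have "(\<Sum>i\<in>S. x $ i *\<^sub>R axis i 1) \<in> simplex_of S"
    unfolding simplex_of_def using x by (intro convex_sum) (auto intro: hull_inc)
  moreover have "(\<Sum>i\<in>S. x $ i *\<^sub>R axis i 1) = x"
    using x by (simp add: vec_eq_iff sum_component axis_def mult_delta_right)
  ultimately show "x \<in> simplex_of S" by simp
qed

lemma mem_simplex_of_subset_iff:
  fixes x :: "real ^ 'n::finite"
  assumes "M \<subseteq> S"
  shows "x \<in> simplex_of M \<longleftrightarrow> x \<in> simplex_of S \<and> (\<forall>i. x $ i \<noteq> 0 \<longrightarrow> i \<in> M)"
  using assms unfolding mem_simplex_of_iff by auto

lemma simplex_of_subset_iff: "simplex_of A \<subseteq> simplex_of B \<longleftrightarrow> A \<subseteq> B"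
proof
  assume sub: "simplex_of A \<subseteq> simplex_of B"
  show "A \<subseteq> B"
  proof
    fix a assume "a \<in> A"
    then have "axis a 1 \<in> simplex_of B"
      using sub axis_mem_simplex_of by blast
    then show "a \<in> B"
      unfolding mem_simplex_of_iff by (metis axis_nth zero_neq_one)
  qed
qed (simp add: simplex_of_def hull_mono image_mono)

definition maximizers :: "('a \<Rightarrow> 'b::linorder) \<Rightarrow> 'a set \<Rightarrow> 'a set" where
  "maximizers f S = {s \<in> S. \<forall>t\<in>S. f t \<le> f s}"

lemma maximizers_subset: "maximizers f S \<subseteq> S"
  by (auto simp: maximizers_def)

lemma maximizers_nonempty:
  assumes "finite S" and "S \<noteq> {}"
  shows "maximizers f S \<noteq> {}"
proof -
  have "Max (f ` S) \<in> f ` S"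
    using assms by simp
  then obtain s where "s \<in> S" "f s = Max (f ` S)"
    by (metis imageE)
  then have "s \<in> maximizers f S"
    using assms(1) by (simp add: maximizers_def)
  then show ?thesis by blast
qed

lemma inner_le_maximum_on_simplex_of:
  fixes w x :: "real ^ 'n::finite"
  assumes x: "x \<in> simplex_of S" and s: "s \<in> maximizers (($) w) S"
  shows "w \<bullet> x \<le> w $ s"
    and "w \<bullet> x = w $ s \<longleftrightarrow> (\<forall>i. x $ i \<noteq> 0 \<longrightarrow> i \<in> maximizers (($) w) S)"
proof -
  have coords: "\<forall>i. 0 \<le> x $ i" "\<forall>i. i \<notin> S \<longrightarrow> x $ i = 0" "(\<Sum>i\<in>UNIV. x $ i) = 1"
    using x by (simp_all add: mem_simplex_of_iff)
  have gap: "w $ s - w \<bullet> x = (\<Sum>i\<in>UNIV. (w $ s - w $ i) * x $ i)"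
    using coords(3)
    by (simp add: inner_vec_def left_diff_distrib sum_subtractf sum_distrib_left[symmetric])
  have term_nonneg: "0 \<le> (w $ s - w $ i) * x $ i" for i
    using coords s by (cases "i \<in> S") (auto simp: maximizers_def)
  then show "w \<bullet> x \<le> w $ s"
    using gap sum_nonneg[of UNIV "\<lambda>i. (w $ s - w $ i) * x $ i"] by simp
  have "w \<bullet> x = w $ s \<longleftrightarrow> (\<forall>i. (w $ s - w $ i) * x $ i = 0)"
    using gap sum_nonneg_eq_0_iff[of UNIV "\<lambda>i. (w $ s - w $ i) * x $ i"] term_nonneg by auto
  also have "\<dots> \<longleftrightarrow> (\<forall>i. x $ i \<noteq> 0 \<longrightarrow> i \<in> maximizers (($) w) S)"
    using coords(2) s by (auto simp: maximizers_def intro: order.antisym) metis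
  finally show "w \<bullet> x = w $ s \<longleftrightarrow> (\<forall>i. x $ i \<noteq> 0 \<longrightarrow> i \<in> maximizers (($) w) S)" .
qed

lemma support_face_simplex_of:
  fixes w :: "real ^ 'n::finite"
  shows "support_face (simplex_of S) w = simplex_of (maximizers (($) w) S)"
proof (cases "S = {}")
  case True
  then show ?thesis by (simp add: simplex_of_def support_face_def maximizers_def)
next
  case False
  then obtain s where s: "s \<in> maximizers (($) w) S"
    using maximizers_nonempty[OF finite False, of "($) w"] by blast
  have "s \<in> S"
    using s by (simp add: maximizers_def)
  then have vertex: "axis s 1 \<in> simplex_of S" "w \<bullet> axis s 1 = w $ s"
    by (simp_all add: axis_mem_simplex_of inner_axis)
  show ?thesis
  proof (intro set_eqI)
    fix x
    have "x \<in> support_face (simplex_of S) w \<longleftrightarrow> x \<in> simplex_of S \<and> w \<bullet> x = w $ s"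
    proof
      assume x: "x \<in> support_face (simplex_of S) w"
      then have "x \<in> simplex_of S" "\<forall>y\<in>simplex_of S. w \<bullet> y \<le> w \<bullet> x"
        by (simp_all add: support_face_def)
      then have "x \<in> simplex_of S" "w \<bullet> axis s 1 \<le> w \<bullet> x"
        using vertex(1) by simp_all
      then show "x \<in> simplex_of S \<and> w \<bullet> x = w $ s"
        using inner_le_maximum_on_simplex_of(1)[OF _ s, of x] vertex(2) by linarith
    next
      assume "x \<in> simplex_of S \<and> w \<bullet> x = w $ s"
      then show "x \<in> support_face (simplex_of S) w"
        using inner_le_maximum_on_simplex_of(1)[OF _ s] by (simp add: support_face_def)
    qed
    also have "\<dots> \<longleftrightarrow> x \<in> simplex_of S \<and> (\<forall>i. x $ i \<noteq> 0 \<longrightarrow> i \<in> maximizers (($) w) S)"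
      using inner_le_maximum_on_simplex_of(2)[OF _ s] by blast
    also have "\<dots> \<longleftrightarrow> x \<in> simplex_of (maximizers (($) w) S)"
      by (simp add: mem_simplex_of_subset_iff[OF maximizers_subset])
    finally show "x \<in> support_face (simplex_of S) w \<longleftrightarrow> x \<in> simplex_of (maximizers (($) w) S)" .
  qed
qed

lemma support_face_simplex_sum_subset_iff:
  fixes w w' :: "real ^ 'n::finite" and I :: "'n set set"
  assumes "{} \<notin> I"
  shows "support_face (minkowski_sum I simplex_of) w \<subseteq> support_face (minkowski_sum I simplex_of) w'
    \<longleftrightarrow> (\<forall>S\<in>I. maximizers (($) w) S \<subseteq> maximizers (($) w') S)"
proof -
  have "support_face (simplex_of S) w \<noteq> {}" if "S \<in> I" for S
  proof -
    have "S \<noteq> {}"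
      using that assms by blast
    then show ?thesis
      unfolding support_face_simplex_of by (simp add: simplex_of_def maximizers_nonempty)
  qed
  then show ?thesis
    by (simp add: support_face_minkowski_sum_subset_iff support_face_simplex_of simplex_of_subset_iff)
qed

lemma normal_fan_simplex_sums_eqI:
  fixes I J :: "'n::finite set set"
  assumes "{} \<notin> I" and "{} \<notin> J"
    and "\<And>(w :: real ^ 'n) (w' :: real ^ 'n).
      (\<forall>S\<in>I. maximizers (($) w) S \<subseteq> maximizers (($) w') S) \<longleftrightarrow>
      (\<forall>S\<in>J. maximizers (($) w) S \<subseteq> maximizers (($) w') S)"
  shows "normal_fan (minkowski_sum I simplex_of) = normal_fan (minkowski_sum J simplex_of)"
proof (rule normal_fan_eqI)
  have "polytope (simplex_of S)" "simplex_of S \<noteq> {} \<longleftrightarrow> S \<noteq> {}" for S :: "'n set"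
    by (simp_all add: simplex_of_def polytope_convex_hull)
  then show "polytope (minkowski_sum I simplex_of)" "minkowski_sum I simplex_of \<noteq> {}"
    "polytope (minkowski_sum J simplex_of)" "minkowski_sum J simplex_of \<noteq> {}"
    using assms(1,2) by (auto intro!: polytope_minkowski_sum minkowski_sum_nonempty)
next
  fix w w' :: "real ^ 'n"
  show "support_face (minkowski_sum I simplex_of) w \<subseteq> support_face (minkowski_sum I simplex_of) w'
    \<longleftrightarrow> support_face (minkowski_sum J simplex_of) w \<subseteq> support_face (minkowski_sum J simplex_of) w'"
    using assms(3)[of w w'] by (simp add: support_face_simplex_sum_subset_iff assms(1,2))
qed

lemma relpow_shortest_chain:
  assumes chain: "\<forall>l<k. (f l, f (Suc l)) \<in> R"
    and shortest: "\<forall>k'<k. (f 0, f k) \<notin> R ^^ k'"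
  shows relpow_shortest_chain_inj: "\<lbrakk>i < j; j \<le> k\<rbrakk> \<Longrightarrow> f i \<noteq> f j"
    and relpow_shortest_chain_chordless: "\<lbrakk>Suc i < j; j \<le> k\<rbrakk> \<Longrightarrow> (f i, f j) \<notin> R"
proof -
  have segment: "(f a, f b) \<in> R ^^ (b - a)" if "a \<le> b" "b \<le> k" for a b
    unfolding relpow_fun_conv
    by (rule exI[of _ "\<lambda>l. f (a + l)"]) (use that chain in auto)
  have shortcut: "(f 0, f k) \<in> R ^^ (i + d + (k - j))"
    if "(f i, f j) \<in> R ^^ d" "i \<le> j" "j \<le> k" for i j d
    using segment[of 0 i] that segment[of j k] unfolding relpow_add by auto
  show "f i \<noteq> f j" if "i < j" "j \<le> k"
  proof
    assume "f i = f j"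
    then have "(f 0, f k) \<in> R ^^ (i + 0 + (k - j))"
      using shortcut[of i j 0] that by simp
    moreover have "i + 0 + (k - j) < k"
      using that by linarith
    ultimately show False
      using shortest by blast
  qed
  show "(f i, f j) \<notin> R" if "Suc i < j" "j \<le> k"
  proof
    assume "(f i, f j) \<in> R"
    then have "(f 0, f k) \<in> R ^^ (i + 1 + (k - j))"
      using shortcut[of i j 1] that by simp
    moreover have "i + 1 + (k - j) < k"
      using that by linarith
    ultimately show False
      using shortest by blast
  qed
qed

lemma chordless_chain_induced_iso_path:
  assumes graph: "simple_graph E"
    and inj: "inj_on f {0..<Suc k}"
    and chain: "\<forall>l<k. E (f l) (f (Suc l))"
    and chordless: "\<forall>i j. Suc i < j \<longrightarrow> j \<le> k \<longrightarrow> \<not> E (f i) (f j)"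
  shows "induced_iso_path E (f ` {0..<Suc k})"
proof -
  have sym: "E x y \<Longrightarrow> E y x" and irrefl: "\<not> E x x" for x y
    using graph by (auto simp: simple_graph_def)
  have edges: "E (f i) (f j) \<longleftrightarrow> path_edge i j" if "i < Suc k" "j < Suc k" for i j
  proof
    assume edge: "E (f i) (f j)"
    consider "i = j" | "Suc i < j" | "Suc j < i" | "path_edge i j"
      unfolding path_edge_def by linarith
    then show "path_edge i j"
    proof cases
      case 1
      then show ?thesis using edge irrefl by simp
    next
      case 2
      then show ?thesis using edge chordless that by auto
    next
      case 3
      then show ?thesis using sym[OF edge] chordless that by auto
    qed
  next
    assume "path_edge i j"
    then show "E (f i) (f j)"
      using chain sym that unfolding path_edge_def by auto
  qed
  have "card (f ` {0..<Suc k}) = Suc k"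
    using inj by (simp add: card_image)
  then show ?thesis
    unfolding induced_iso_path_def using inj edges by (auto simp: bij_betw_def)
qed

lemma induced_path_through:
  assumes graph: "simple_graph E" and "s \<in> S"
    and "(s, t) \<in> {(u, v). u \<in> S \<and> v \<in> S \<and> E u v}\<^sup>*"
  shows "\<exists>P\<subseteq>S. s \<in> P \<and> t \<in> P \<and> induced_iso_path E P"
proof -
  let ?R = "{(u, v). u \<in> S \<and> v \<in> S \<and> E u v}"
  define k where "k = (LEAST k. (s, t) \<in> ?R ^^ k)"
  have "(s, t) \<in> ?R ^^ k"
    unfolding k_def by (rule LeastI_ex) (use assms(3) rtrancl_power in blast)
  then obtain f where f: "f 0 = s" "f k = t" and chain: "\<forall>l<k. (f l, f (Suc l)) \<in> ?R"
    unfolding relpow_fun_conv by blast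
  have "(s, t) \<notin> ?R ^^ k'" if "k' < k" for k'
    using not_less_Least[OF that[unfolded k_def]] .
  then have shortest: "\<forall>k'<k. (f 0, f k) \<notin> ?R ^^ k'"
    using f by simp
  have in_S: "f l \<in> S" if "l < Suc k" for l
  proof (cases "l < k")
    case True
    then show ?thesis using chain by blast
  next
    case False
    then have "l = k" using that by simp
    then show ?thesis
      using chain f(1) \<open>s \<in> S\<close> by (cases k) auto
  qed
  have "inj_on f {0..<Suc k}"
    unfolding inj_on_def
    by (metis atLeastLessThan_iff less_Suc_eq_le linorder_neqE_nat
        relpow_shortest_chain_inj[OF chain shortest])
  moreover have "\<forall>i j. Suc i < j \<longrightarrow> j \<le> k \<longrightarrow> \<not> E (f i) (f j)"
    using relpow_shortest_chain_chordless[OF chain shortest] in_S by fastforce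
  ultimately have "induced_iso_path E (f ` {0..<Suc k})"
    using chordless_chain_induced_iso_path[OF graph] chain by blast
  moreover have "f ` {0..<Suc k} \<subseteq> S" "s \<in> f ` {0..<Suc k}" "t \<in> f ` {0..<Suc k}"
    using in_S f by force+
  ultimately show ?thesis by blast
qed

lemma induced_iso_path_imp_induced_connected:
  assumes graph: "simple_graph E" and P: "induced_iso_path E P" "P \<noteq> {}"
  shows "induced_connected E P"
proof -
  let ?R = "{(u, v). u \<in> P \<and> v \<in> P \<and> E u v}"
  obtain f where bij: "bij_betw f {0..<card P} P"
    and edges: "\<forall>i<card P. \<forall>j<card P. E (f i) (f j) \<longleftrightarrow> path_edge i j"
    using P(1) unfolding induced_iso_path_def by blast
  have step: "(f i, f (Suc i)) \<in> ?R" if "Suc i < card P" for i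
    using edges that bij_betw_apply[OF bij] by (simp add: path_edge_def)
  have "(f i, f j) \<in> ?R ^^ (j - i)" if "i \<le> j" "j < card P" for i j
    unfolding relpow_fun_conv by (rule exI[of _ "\<lambda>l. f (i + l)"]) (use that step in auto)
  then have forward: "(f i, f j) \<in> ?R\<^sup>*" if "i \<le> j" "j < card P" for i j
    using that by (blast intro: relpow_imp_rtrancl)
  have "sym ?R"
    using graph by (auto simp: simple_graph_def sym_def)
  then have "(f j, f i) \<in> ?R\<^sup>*" if "i \<le> j" "j < card P" for i j
    using forward[OF that] sym_rtrancl by (metis symD)
  then have connected: "(f i, f j) \<in> ?R\<^sup>*" if "i < card P" "j < card P" for i j
    using forward that by (cases "i \<le> j") auto
  have "\<exists>i<card P. x = f i" if "x \<in> P" for x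
    using bij that by (force simp: bij_betw_def)
  then show ?thesis
    unfolding induced_connected_def using P(2) connected by blast
qed

lemma maximizers_subset_if_induced_paths:
  assumes graph: "simple_graph E" and conn: "induced_connected E S"
    and paths: "\<And>P. P \<subseteq> S \<Longrightarrow> induced_iso_path E P \<Longrightarrow> maximizers f P \<subseteq> maximizers g P"
  shows "maximizers f S \<subseteq> maximizers g S"
proof
  fix s assume s: "s \<in> maximizers f S"
  have "g t \<le> g s" if "t \<in> S" for t
  proof -
    have "s \<in> S" using s by (simp add: maximizers_def)
    with conn that obtain P where P: "P \<subseteq> S" "s \<in> P" "t \<in> P" "induced_iso_path E P"
      using induced_path_through[OF graph] unfolding induced_connected_def by meson
    then have "s \<in> maximizers f P"
      using s by (auto simp: maximizers_def)
    then have "s \<in> maximizers g P"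
      using paths P by blast
    then show ?thesis
      using P(3) by (simp add: maximizers_def)
  qed
  then show "s \<in> maximizers g S"
    using s by (simp add: maximizers_def)
qed

theorem mainTheorem6:
  fixes E :: "'n::finite \<Rightarrow> 'n \<Rightarrow> bool" and m :: nat
  assumes "simple_graph E" and "graph_connected E" and "m \<ge> 1"
  shows "normal_fan (Q_conn E m) = normal_fan (Q_path E m)"
proof -
  let ?conn = "{S. S \<noteq> {} \<and> card S \<le> m + 1 \<and> induced_connected E S}"
  let ?path = "{S. S \<noteq> {} \<and> card S \<le> m + 1 \<and> induced_iso_path E S}"
  have "?path \<subseteq> ?conn"
    using induced_iso_path_imp_induced_connected[OF assms(1)] by blast
  moreover have "maximizers (($) w) S \<subseteq> maximizers (($) w') S"
    if paths: "\<forall>P\<in>?path. maximizers (($) w) P \<subseteq> maximizers (($) w') P" and S: "S \<in> ?conn"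
    for w w' :: "real ^ 'n" and S
  proof (rule maximizers_subset_if_induced_paths[OF assms(1)])
    show "induced_connected E S" using S by blast
    fix P assume "P \<subseteq> S" "induced_iso_path E P"
    then have "P = {} \<or> P \<in> ?path"
      using S card_mono[of S P] by auto
    then show "maximizers (($) w) P \<subseteq> maximizers (($) w') P"
      using paths by (auto simp: maximizers_def)
  qed
  ultimately show ?thesis
    unfolding Q_conn_def Q_path_def by (intro normal_fan_simplex_sums_eqI) blast+
qed

end
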